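(* For every $n\ge 3$, the strong metric dimension of the convex polytope graph $S_n$ satisfies $sdim(S_n)=n$ if $n$ is odd and $sdim(S_n)=\frac{3n}{2}$ if $n$ is even.
   Context: For $n\ge 3$, $S_n$ is the graph with vertex set $\{a_i,b_i,c_i,d_i : 1\le i\le n\}$ and edge set $\{a_ia_{i+1}, b_ib_{i+1}, c_ic_{i+1}, d_id_{i+1}, a_{i+1}b_i, a_ib_i, b_ic_i, c_id_i : 1\le i\le n\}$, indices taken modulo $n$. $d(u,v)$ is the graph distance. A vertex $w$ strongly resolves distinct vertices $u,v$ if $d(v,w)=d(v,u)+d(u,w)$ or $d(u,w)=d(u,v)+d(v,w)$. A set $S$ of vertices is a strong resolving set if every two distinct vertices are strongly resolved by some vertex of $S$; $sdim(G)$ is the minimum cardinality of a strong resolving set of $G$. *)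

theory Defs
  imports Main
begin

text \<open>Generic notions for a (finite, undirected) graph given by a vertex set V and a
symmetric edge relation E (a set of ordered pairs).\<close>

definition gdist :: "('a \<times> 'a) set \<Rightarrow> 'a \<Rightarrow> 'a \<Rightarrow> nat" where
  "gdist E u v = (LEAST k. (u, v) \<in> E ^^ k)"

definition strongly_resolves :: "('a \<times> 'a) set \<Rightarrow> 'a \<Rightarrow> 'a \<Rightarrow> 'a \<Rightarrow> bool" where
  "strongly_resolves E w u v \<longleftrightarrow>
     gdist E v w = gdist E v u + gdist E u w \<or> gdist E u w = gdist E u v + gdist E v w"

definition strong_resolving_set :: "'a set \<Rightarrow> ('a \<times> 'a) set \<Rightarrow> 'a set \<Rightarrow> bool" where
  "strong_resolving_set V E S \<longleftrightarrow> S \<subseteq> V \<and>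
     (\<forall>u\<in>V. \<forall>v\<in>V. u \<noteq> v \<longrightarrow> (\<exists>w\<in>S. strongly_resolves E w u v))"

definition sdim :: "'a set \<Rightarrow> ('a \<times> 'a) set \<Rightarrow> nat" where
  "sdim V E = (LEAST k. \<exists>S. strong_resolving_set V E S \<and> card S = k)"

text \<open>The convex polytope graph S_n. Vertices a_i, b_i, c_i, d_i with indices
i in {0..n-1} (the paper's indices 1..n, shifted; taken modulo n).\<close>

datatype pvert = PA nat | PB nat | PC nat | PD nat

definition Sn_verts :: "nat \<Rightarrow> pvert set" where
  "Sn_verts n = {PA i | i. i < n} \<union> {PB i | i. i < n} \<union> {PC i | i. i < n} \<union> {PD i | i. i < n}"

definition Sn_edges :: "nat \<Rightarrow> (pvert \<times> pvert) set" where
  "Sn_edges n =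
     {(PA i, PA ((i + 1) mod n)) | i. i < n} \<union>
     {(PB i, PB ((i + 1) mod n)) | i. i < n} \<union>
     {(PC i, PC ((i + 1) mod n)) | i. i < n} \<union>
     {(PD i, PD ((i + 1) mod n)) | i. i < n} \<union>
     {(PA ((i + 1) mod n), PB i) | i. i < n} \<union>
     {(PA i, PB i) | i. i < n} \<union>
     {(PB i, PC i) | i. i < n} \<union>
     {(PC i, PD i) | i. i < n}"

definition Sn_adj :: "nat \<Rightarrow> (pvert \<times> pvert) set" where
  "Sn_adj n = Sn_edges n \<union> (Sn_edges n)\<inverse>"

end

theory Submission
  imports Defs
begin

text \<open>A vertex set is strongly resolving iff it contains an end of every pair \<open>u, v\<close> of mutually
  maximally distant (MMD) vertices, i.e.\ no neighbour of \<open>u\<close> is farther from \<open>v\<close> and no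
  neighbour of \<open>v\<close> is farther from \<open>u\<close> (Oellermann and Peters-Fransen): an MMD pair is strongly
  resolved only by its own ends, while every pair lies on a geodesic joining some MMD pair, whose
  ends resolve it. In \<open>S\<^sub>n\<close> the distance has a closed form, from which one reads off that every
  MMD pair contains a \<open>d\<close>-vertex or consists of two antipodal \<open>a\<close>-vertices, and these exist only
  for even \<open>n\<close>. So the \<open>d\<close>-vertices, together with one half of the \<open>a\<close>-cycle when \<open>n\<close> is even,
  form a strong resolving set. Conversely, pairing each \<open>a\<^sub>i\<close> (odd \<open>n\<close>), resp. each \<open>b\<^sub>i\<close>
  (even \<open>n\<close>), with the \<open>d\<close>-vertex diametrically opposite to it, and for even \<open>n\<close> also each
  \<open>a\<^sub>i\<close> with its antipode, gives \<open>n\<close>, resp. \<open>3n/2\<close>, disjoint MMD pairs, each of which every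
  strong resolving set must hit.\<close>

locale graph_distance =
  fixes V :: "'a set" and E :: "('a \<times> 'a) set" and D :: "'a \<Rightarrow> 'a \<Rightarrow> int"
  assumes edges_subset: "E \<subseteq> V \<times> V"
    and edge_sym: "(x, y) \<in> E \<Longrightarrow> (y, x) \<in> E"
    and dist_self: "D u u = 0"
    and dist_pos: "u \<in> V \<Longrightarrow> v \<in> V \<Longrightarrow> u \<noteq> v \<Longrightarrow> 0 < D u v"
    and dist_sym: "D u v = D v u"
    and dist_edge_le: "u \<in> V \<Longrightarrow> (x, y) \<in> E \<Longrightarrow> D u y \<le> D u x + 1"
    and dist_predecessor:
      "u \<in> V \<Longrightarrow> v \<in> V \<Longrightarrow> 0 < D u v \<Longrightarrow> \<exists>y. (y, v) \<in> E \<and> D u y + 1 = D u v"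
    and finite_vertices: "finite V"
begin

lemma dist_nonneg: "u \<in> V \<Longrightarrow> v \<in> V \<Longrightarrow> 0 \<le> D u v"
  using dist_self dist_pos[of u v] by (cases "u = v") auto

lemma relpow_dist:
  assumes u: "u \<in> V" and v: "v \<in> V"
  shows "(u, v) \<in> E ^^ nat (D u v)"
proof -
  have "(u, w) \<in> E ^^ k" if "w \<in> V" "D u w = int k" for k w
    using that
  proof (induction k arbitrary: w)
    case 0
    then show ?case using dist_pos[OF u] by fastforce
  next
    case (Suc k)
    then obtain y where y: "(y, w) \<in> E" "D u y + 1 = D u w"
      using dist_predecessor[OF u] by fastforce
    then have "(u, y) \<in> E ^^ k" using Suc edges_subset by auto
    then show ?case using y(1) by auto
  qed
  then show ?thesis using v dist_nonneg[OF u v] by simp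
qed

lemma dist_relpow_le: "u \<in> V \<Longrightarrow> (x, y) \<in> E ^^ k \<Longrightarrow> D u y \<le> D u x + int k"
proof (induction k arbitrary: y)
  case (Suc k)
  then obtain z where "(x, z) \<in> E ^^ k" "(z, y) \<in> E" by auto
  then show ?case using Suc dist_edge_le[of u z y] by fastforce
qed simp

lemma gdist_eq_dist:
  assumes "u \<in> V" "v \<in> V"
  shows "int (gdist E u v) = D u v"
proof -
  have "gdist E u v = nat (D u v)"
    unfolding gdist_def
  proof (rule Least_equality)
    show "(u, v) \<in> E ^^ nat (D u v)" using assms by (rule relpow_dist)
    show "nat (D u v) \<le> k" if "(u, v) \<in> E ^^ k" for k
      using dist_relpow_le[OF assms(1) that] dist_self[of u] by simp
  qed
  then show ?thesis using dist_nonneg[OF assms] by simp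
qed

lemma dist_triangle:
  assumes "u \<in> V" "v \<in> V" "w \<in> V"
  shows "D u w \<le> D u v + D v w"
  using dist_relpow_le[OF assms(1) relpow_dist[OF assms(2,3)]] dist_nonneg[OF assms(2,3)] by simp

lemma strongly_resolves_iff:
  assumes "u \<in> V" "v \<in> V" "w \<in> V"
  shows "strongly_resolves E w u v \<longleftrightarrow> D v w = D v u + D u w \<or> D u w = D u v + D v w"
  unfolding strongly_resolves_def using assms by (simp flip: gdist_eq_dist) arith

definition mutually_maximally_distant :: "'a \<Rightarrow> 'a \<Rightarrow> bool" where
  "mutually_maximally_distant u v \<longleftrightarrow>
     (\<forall>x. (u, x) \<in> E \<longrightarrow> D x v \<le> D u v) \<and> (\<forall>y. (v, y) \<in> E \<longrightarrow> D u y \<le> D u v)"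

lemma mmd_sym: "mutually_maximally_distant u v \<Longrightarrow> mutually_maximally_distant v u"
  unfolding mutually_maximally_distant_def using dist_sym by metis

lemma mmd_no_geodesic_beyond:
  assumes "u \<in> V" "v \<in> V" "w \<in> V" "mutually_maximally_distant u v"
    and geodesic: "D v w = D v u + D u w"
  shows "w = u"
proof (rule ccontr)
  assume "w \<noteq> u"
  then obtain y where y: "(y, u) \<in> E" "D w y + 1 = D w u"
    using dist_predecessor dist_pos assms by meson
  have "y \<in> V" using y edges_subset by auto
  have "D y v \<le> D u v"
    using assms(4) edge_sym[OF y(1)] unfolding mutually_maximally_distant_def by blast
  moreover have "D v w \<le> D v y + D y w" using dist_triangle assms \<open>y \<in> V\<close> by blast
  ultimately show False using geodesic y(2) dist_sym[of w y] dist_sym[of w u] dist_sym[of y v] dist_sym[of u v]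
    by linarith
qed

lemma mmd_strongly_resolved_only_by_ends:
  assumes "u \<in> V" "v \<in> V" "w \<in> V" "mutually_maximally_distant u v" "strongly_resolves E w u v"
  shows "w = u \<or> w = v"
  using assms strongly_resolves_iff mmd_no_geodesic_beyond mmd_sym by metis

lemma strong_resolving_set_hits_mmd:
  assumes "strong_resolving_set V E S" "u \<in> V" "v \<in> V" "u \<noteq> v" "mutually_maximally_distant u v"
  shows "u \<in> S \<or> v \<in> S"
  using assms mmd_strongly_resolved_only_by_ends unfolding strong_resolving_set_def by blast

lemma geodesic_extend:
  assumes "u \<in> V" "v \<in> V" "a \<in> V" "b \<in> V" "(a, x) \<in> E" "D a b < D x b"
    and "D a b = D a u + D u v + D v b"
  shows "D x b = D x u + D u v + D v b"
proof -
  have "x \<in> V" using assms(5) edges_subset by auto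
  have "D x b \<le> D x u + D u b" using dist_triangle \<open>x \<in> V\<close> assms by blast
  moreover have "D u b \<le> D u v + D v b" using dist_triangle assms by blast
  moreover have "D u x \<le> D u a + 1" using dist_edge_le assms by blast
  ultimately show ?thesis using assms(6,7) dist_sym[of u x] dist_sym[of u a] by linarith
qed

text \<open>Extending a geodesic through \<open>u\<close> and \<open>v\<close> as far as possible in both directions
  ends in an MMD pair.\<close>
lemma mmd_extension:
  assumes u: "u \<in> V" and v: "v \<in> V"
  obtains a b where "a \<in> V" "b \<in> V" "mutually_maximally_distant a b"
    "D a b = D a u + D u v + D v b"
proof -
  define T where "T = {(a, b) \<in> V \<times> V. D a b = D a u + D u v + D v b}"
  let ?len = "\<lambda>(a, b). D a b"
  have "(u, v) \<in> T" using u v dist_self unfolding T_def by simp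
  moreover have "finite T"
    using finite_vertices unfolding T_def by (auto intro: finite_subset[of _ "V \<times> V"])
  ultimately have "Max (?len ` T) \<in> ?len ` T" by (intro Max_in) auto
  then obtain a b where ab: "(a, b) \<in> T" "D a b = Max (?len ` T)" by auto
  have longest: "D x y \<le> D a b" if "(x, y) \<in> T" for x y
    using ab(2) Max_ge[OF finite_imageI[OF \<open>finite T\<close>]] that by force
  have "a \<in> V" "b \<in> V" and geo: "D a b = D a u + D u v + D v b" using ab(1) unfolding T_def by auto
  have "mutually_maximally_distant a b"
    unfolding mutually_maximally_distant_def
  proof (intro conjI allI impI; rule ccontr)
    fix x assume "(a, x) \<in> E" "\<not> D x b \<le> D a b"
    then have "(x, b) \<in> T"
      using geodesic_extend[OF u v \<open>a \<in> V\<close> \<open>b \<in> V\<close>] geo edges_subset \<open>b \<in> V\<close>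
      unfolding T_def by auto
    then show False using longest \<open>\<not> D x b \<le> D a b\<close> by fastforce
  next
    fix y assume "(b, y) \<in> E" "\<not> D a y \<le> D a b"
    note sym = dist_sym[of a b] dist_sym[of a y] dist_sym[of b v] dist_sym[of u v] dist_sym[of u a]
      dist_sym[of y v]
    have "D b a = D b v + D v u + D u a" "D b a < D y a" using geo \<open>\<not> D a y \<le> D a b\<close> sym by linarith+
    then have "D y a = D y v + D v u + D u a"
      using geodesic_extend[OF v u \<open>b \<in> V\<close> \<open>a \<in> V\<close> \<open>(b, y) \<in> E\<close>] by blast
    then have "(a, y) \<in> T"
      using \<open>(b, y) \<in> E\<close> \<open>a \<in> V\<close> edges_subset sym unfolding T_def by auto
    then show False using longest \<open>\<not> D a y \<le> D a b\<close> by fastforce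
  qed
  then show ?thesis using that \<open>a \<in> V\<close> \<open>b \<in> V\<close> geo by blast
qed

lemma strong_resolving_set_if_hits_mmd:
  assumes "S \<subseteq> V"
    and hits: "\<And>u v. u \<in> V \<Longrightarrow> v \<in> V \<Longrightarrow> u \<noteq> v \<Longrightarrow> mutually_maximally_distant u v \<Longrightarrow> u \<in> S \<or> v \<in> S"
  shows "strong_resolving_set V E S"
  unfolding strong_resolving_set_def
proof (intro conjI ballI impI assms(1))
  fix u v assume uv: "u \<in> V" "v \<in> V" "u \<noteq> v"
  obtain a b where ab: "a \<in> V" "b \<in> V" "mutually_maximally_distant a b"
    and geo: "D a b = D a u + D u v + D v b"
    using mmd_extension uv by blast
  have "0 < D u v" using dist_pos uv by blast
  then have "a \<noteq> b"
    using geo dist_self[of a] dist_nonneg[of a u] dist_nonneg[of v b] ab uv by auto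
  then have "a \<in> S \<or> b \<in> S" using hits ab by blast
  moreover have "D a b \<le> D a v + D v b" "D a v \<le> D a u + D u v"
    "D a b \<le> D a u + D u b" "D u b \<le> D u v + D v b"
    using dist_triangle ab uv by blast+
  then have "D v a = D v u + D u a" "D u b = D u v + D v b"
    using geo dist_sym[of a v] dist_sym[of a u] dist_sym[of u v] by linarith+
  then have "strongly_resolves E a u v" "strongly_resolves E b u v"
    using ab uv by (auto simp: strongly_resolves_iff)
  ultimately show "\<exists>w\<in>S. strongly_resolves E w u v" by blast
qed

lemma card_le_strong_resolving_set:
  assumes "strong_resolving_set V E S"
    and mmd: "\<And>i. i \<in> I \<Longrightarrow>
      f i \<in> V \<and> g i \<in> V \<and> f i \<noteq> g i \<and> mutually_maximally_distant (f i) (g i)"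
    and disjoint: "\<And>i j. i \<in> I \<Longrightarrow> j \<in> I \<Longrightarrow> i \<noteq> j \<Longrightarrow> {f i, g i} \<inter> {f j, g j} = {}"
  shows "card I \<le> card S"
proof -
  define h where "h i = (if f i \<in> S then f i else g i)" for i
  have "inj_on h I"
    using disjoint unfolding inj_on_def h_def by (metis IntI empty_iff insert_iff)
  moreover have "h ` I \<subseteq> S"
    using strong_resolving_set_hits_mmd[OF assms(1)] mmd unfolding h_def by auto
  moreover have "finite S"
    using assms(1) finite_vertices unfolding strong_resolving_set_def by (auto intro: finite_subset)
  ultimately show ?thesis by (rule card_inj_on_le)
qed

end

lemma sdim_eqI:
  assumes "strong_resolving_set V E S" "card S = k"
    and "\<And>S'. strong_resolving_set V E S' \<Longrightarrow> k \<le> card S'"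
  shows "sdim V E = k"
  unfolding sdim_def by (rule Least_equality) (use assms in auto)

definition cyc_dist :: "int \<Rightarrow> int \<Rightarrow> int \<Rightarrow> int" where
  "cyc_dist N p q = min \<bar>p - q\<bar> (N - \<bar>p - q\<bar>)"

lemma cyc_dist_sym: "cyc_dist N p q = cyc_dist N q p"
  unfolding cyc_dist_def by (simp add: abs_minus_commute)

lemma cyc_dist_self: "0 \<le> N \<Longrightarrow> cyc_dist N p p = 0"
  unfolding cyc_dist_def by simp

lemma cyc_dist_nonneg: "p \<in> {0..<N} \<Longrightarrow> q \<in> {0..<N} \<Longrightarrow> 0 \<le> cyc_dist N p q"
  unfolding cyc_dist_def by auto

lemma cyc_dist_eq_0_iff: "p \<in> {0..<N} \<Longrightarrow> q \<in> {0..<N} \<Longrightarrow> cyc_dist N p q = 0 \<longleftrightarrow> p = q"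
  unfolding cyc_dist_def by (auto simp: min_def)

lemma cyc_dist_le_half: "2 * cyc_dist N p q \<le> N"
  unfolding cyc_dist_def min_def by auto

lemma cyc_dist_le_abs: "cyc_dist N p q \<le> \<bar>p - q\<bar>"
  unfolding cyc_dist_def by simp

lemma cyc_dist_even_iff: "even (cyc_dist (2 * N) p q) \<longleftrightarrow> even (p - q)"
proof -
  have "even (2 * N - \<bar>p - q\<bar>) \<longleftrightarrow> even (p - q)" by simp
  then show ?thesis unfolding cyc_dist_def min_def by simp
qed

lemma cyc_dist_double: "cyc_dist (2 * N) (2 * p) (2 * q) = 2 * cyc_dist N p q"
  unfolding cyc_dist_def by (auto simp: min_def abs_if)

lemma cyc_dist_triangle:
  "p \<in> {0..<N} \<Longrightarrow> q \<in> {0..<N} \<Longrightarrow> r \<in> {0..<N} \<Longrightarrow> cyc_dist N p r \<le> cyc_dist N p q + cyc_dist N q r"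
  unfolding cyc_dist_def by (auto simp: min_def abs_if)

lemma cyc_dist_toward:
  assumes "p \<in> {0..<N}" "q \<in> {0..<N}" "q1 \<in> {0..<N}" "q2 \<in> {0..<N}"
    "q1 \<in> {q + k, q + k - N}" "q2 \<in> {q - k, q - k + N}" "0 \<le> k" "k \<le> cyc_dist N p q"
  shows "cyc_dist N p q1 + k = cyc_dist N p q \<or> cyc_dist N p q2 + k = cyc_dist N p q"
  using assms unfolding cyc_dist_def by (auto simp: min_def abs_if split: if_splits)

lemma cyc_dist_away:
  assumes "p \<in> {0..<N}" "q \<in> {0..<N}" "q1 \<in> {0..<N}" "q2 \<in> {0..<N}"
    "q1 \<in> {q + k, q + k - N}" "q2 \<in> {q - k, q - k + N}" "0 \<le> k" "2 * (cyc_dist N p q + k) \<le> N"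
  shows "cyc_dist N p q1 = cyc_dist N p q + k \<or> cyc_dist N p q2 = cyc_dist N p q + k"
  using assms unfolding cyc_dist_def by (auto simp: min_def abs_if split: if_splits)

definition cyc_succ :: "nat \<Rightarrow> nat \<Rightarrow> nat" where
  "cyc_succ n i = (if Suc i < n then Suc i else 0)"

definition cyc_pred :: "nat \<Rightarrow> nat \<Rightarrow> nat" where
  "cyc_pred n i = (if i = 0 then n - 1 else i - 1)"

lemma Suc_mod_eq_cyc_succ: "i < n \<Longrightarrow> Suc i mod n = cyc_succ n i"
  unfolding cyc_succ_def by (auto dest: Suc_lessI)

lemma cyc_succ_lt: "i < n \<Longrightarrow> cyc_succ n i < n"
  unfolding cyc_succ_def by auto

lemma cyc_pred_lt: "i < n \<Longrightarrow> cyc_pred n i < n"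
  unfolding cyc_pred_def by auto

lemma cyc_succ_pred: "i < n \<Longrightarrow> cyc_succ n (cyc_pred n i) = i"
  unfolding cyc_succ_def cyc_pred_def by auto

lemma int_cyc_succ: "i < n \<Longrightarrow> int (cyc_succ n i) \<in> {int i + 1, int i + 1 - int n}"
  unfolding cyc_succ_def by auto

lemma int_cyc_pred: "i < n \<Longrightarrow> int (cyc_pred n i) \<in> {int i - 1, int i - 1 + int n}"
  unfolding cyc_pred_def by auto

lemma Sn_verts_iff [simp]:
  "PA i \<in> Sn_verts n \<longleftrightarrow> i < n" "PB i \<in> Sn_verts n \<longleftrightarrow> i < n"
  "PC i \<in> Sn_verts n \<longleftrightarrow> i < n" "PD i \<in> Sn_verts n \<longleftrightarrow> i < n"
  unfolding Sn_verts_def by auto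

lemma finite_Sn_verts: "finite (Sn_verts n)"
proof -
  have "Sn_verts n = PA ` {..<n} \<union> PB ` {..<n} \<union> PC ` {..<n} \<union> PD ` {..<n}"
    unfolding Sn_verts_def by auto
  then show ?thesis by simp
qed

lemma Sn_adj_iff:
  "(PA i, PA j) \<in> Sn_adj n \<longleftrightarrow> i < n \<and> j < n \<and> (j = cyc_succ n i \<or> i = cyc_succ n j)"
  "(PA i, PB j) \<in> Sn_adj n \<longleftrightarrow> i < n \<and> j < n \<and> (i = cyc_succ n j \<or> i = j)"
  "(PB j, PA i) \<in> Sn_adj n \<longleftrightarrow> i < n \<and> j < n \<and> (i = cyc_succ n j \<or> i = j)"
  "(PB i, PB j) \<in> Sn_adj n \<longleftrightarrow> i < n \<and> j < n \<and> (j = cyc_succ n i \<or> i = cyc_succ n j)"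
  "(PC i, PC j) \<in> Sn_adj n \<longleftrightarrow> i < n \<and> j < n \<and> (j = cyc_succ n i \<or> i = cyc_succ n j)"
  "(PD i, PD j) \<in> Sn_adj n \<longleftrightarrow> i < n \<and> j < n \<and> (j = cyc_succ n i \<or> i = cyc_succ n j)"
  "(PB i, PC j) \<in> Sn_adj n \<longleftrightarrow> i < n \<and> i = j" "(PC i, PB j) \<in> Sn_adj n \<longleftrightarrow> i < n \<and> i = j"
  "(PC i, PD j) \<in> Sn_adj n \<longleftrightarrow> i < n \<and> i = j" "(PD i, PC j) \<in> Sn_adj n \<longleftrightarrow> i < n \<and> i = j"
  "(PA i, PC j) \<notin> Sn_adj n" "(PC i, PA j) \<notin> Sn_adj n"
  "(PA i, PD j) \<notin> Sn_adj n" "(PD i, PA j) \<notin> Sn_adj n"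
  "(PB i, PD j) \<notin> Sn_adj n" "(PD i, PB j) \<notin> Sn_adj n"
  unfolding Sn_adj_def Sn_edges_def by (auto simp: Suc_mod_eq_cyc_succ cyc_succ_lt)

lemma Sn_adj_verts: "(x, y) \<in> Sn_adj n \<Longrightarrow> x \<in> Sn_verts n \<and> y \<in> Sn_verts n"
  by (cases x; cases y) (auto simp: Sn_adj_iff cyc_succ_lt)

text \<open>The ladder \<open>a\<^sub>0 b\<^sub>0 a\<^sub>1 b\<^sub>1 \<dots>\<close> is a cycle of length \<open>2n\<close>: put
  \<open>a\<^sub>i\<close> at position \<open>2i\<close> and \<open>b\<^sub>i, c\<^sub>i, d\<^sub>i\<close> at position \<open>2i+1\<close>, on levels 0, 0, 1, 2.
  An edge changes either the level by one or the position by at most two, and shortest paths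
  can do both independently.\<close>

fun lev :: "pvert \<Rightarrow> int" where
  "lev (PA i) = 0" | "lev (PB i) = 0" | "lev (PC i) = 1" | "lev (PD i) = 2"

fun pos :: "pvert \<Rightarrow> int" where
  "pos (PA i) = 2 * int i" | "pos (PB i) = 2 * int i + 1"
| "pos (PC i) = 2 * int i + 1" | "pos (PD i) = 2 * int i + 1"

definition Sn_dist :: "nat \<Rightarrow> pvert \<Rightarrow> pvert \<Rightarrow> int" where
  "Sn_dist n x y = \<bar>lev x - lev y\<bar> + (cyc_dist (2 * int n) (pos x) (pos y) + 1) div 2"

lemma pos_range: "v \<in> Sn_verts n \<Longrightarrow> pos v \<in> {0..<2 * int n}"
  by (cases v) auto

lemma lev_range: "0 \<le> lev v \<and> lev v \<le> 2"
  by (cases v) auto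

lemma even_pos_iff: "even (pos v) \<longleftrightarrow> (\<exists>i. v = PA i)"
  by (cases v) auto

lemma pos_lev_inj: "pos u = pos v \<Longrightarrow> lev u = lev v \<Longrightarrow> u = v"
  by (cases u; cases v) (auto, presburger+)

lemma Sn_dist_sym: "Sn_dist n u v = Sn_dist n v u"
  unfolding Sn_dist_def by (simp add: cyc_dist_sym abs_minus_commute)

lemma Sn_dist_self: "Sn_dist n u u = 0"
  unfolding Sn_dist_def by (simp add: cyc_dist_self)

lemma Sn_dist_pos:
  assumes "u \<in> Sn_verts n" "v \<in> Sn_verts n" "u \<noteq> v"
  shows "0 < Sn_dist n u v"
proof -
  have "0 \<le> cyc_dist (2 * int n) (pos u) (pos v)" using assms pos_range cyc_dist_nonneg by blast
  moreover have "lev u \<noteq> lev v \<or> cyc_dist (2 * int n) (pos u) (pos v) \<noteq> 0"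
    using assms pos_range cyc_dist_eq_0_iff pos_lev_inj by blast
  ultimately show ?thesis unfolding Sn_dist_def by auto
qed

lemma Sn_adj_shape:
  assumes "(x, y) \<in> Sn_adj n"
  shows "lev x = lev y \<and> cyc_dist (2 * int n) (pos x) (pos y) \<le> 2
    \<or> pos x = pos y \<and> \<bar>lev x - lev y\<bar> = 1"
  using assms by (cases x; cases y) (auto simp: Sn_adj_iff cyc_dist_def cyc_succ_def split: if_splits)

lemma Sn_dist_edge_le:
  assumes "u \<in> Sn_verts n" "(x, y) \<in> Sn_adj n"
  shows "Sn_dist n u y \<le> Sn_dist n u x + 1"
  using Sn_adj_shape[OF assms(2)]
proof
  assume "lev x = lev y \<and> cyc_dist (2 * int n) (pos x) (pos y) \<le> 2"
  moreover have "cyc_dist (2 * int n) (pos u) (pos y)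
      \<le> cyc_dist (2 * int n) (pos u) (pos x) + cyc_dist (2 * int n) (pos x) (pos y)"
    using assms Sn_adj_verts pos_range cyc_dist_triangle by blast
  ultimately show ?thesis unfolding Sn_dist_def by simp presburger
next
  assume "pos x = pos y \<and> \<bar>lev x - lev y\<bar> = 1"
  then show ?thesis unfolding Sn_dist_def by auto
qed

text \<open>Since \<open>Sn_dist\<close> halves the cyclic distance rounding up, moving one position closer
  shortens the distance only from an odd cyclic distance.\<close>
lemma Sn_dist_step_toward:
  assumes V: "u \<in> Sn_verts n" "v \<in> Sn_verts n" "y1 \<in> Sn_verts n" "y2 \<in> Sn_verts n"
    and lev: "lev y1 = lev v" "lev y2 = lev v"
    and pos: "pos y1 \<in> {pos v + k, pos v + k - 2 * int n}" "pos y2 \<in> {pos v - k, pos v - k + 2 * int n}"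
    and k: "k = 2 \<or> k = 1 \<and> odd (cyc_dist (2 * int n) (pos u) (pos v))"
      "k \<le> cyc_dist (2 * int n) (pos u) (pos v)"
  shows "Sn_dist n u y1 + 1 = Sn_dist n u v \<or> Sn_dist n u y2 + 1 = Sn_dist n u v"
proof -
  let ?c = "cyc_dist (2 * int n) (pos u) (pos v)"
  have "cyc_dist (2 * int n) (pos u) (pos y1) + k = ?c \<or> cyc_dist (2 * int n) (pos u) (pos y2) + k = ?c"
    using V pos_range pos k by (intro cyc_dist_toward) auto
  moreover have "(c' + 1) div 2 + 1 = (?c + 1) div 2" if "c' + k = ?c" for c'
    using k that by presburger
  ultimately show ?thesis using lev unfolding Sn_dist_def by auto
qed

fun reindex :: "(nat \<Rightarrow> nat) \<Rightarrow> pvert \<Rightarrow> pvert" where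
  "reindex f (PA i) = PA (f i)" | "reindex f (PB i) = PB (f i)"
| "reindex f (PC i) = PC (f i)" | "reindex f (PD i) = PD (f i)"

lemma Sn_ring_neighbours:
  assumes "v \<in> Sn_verts n"
  shows "(reindex (cyc_succ n) v, v) \<in> Sn_adj n" "(reindex (cyc_pred n) v, v) \<in> Sn_adj n"
    "lev (reindex f v) = lev v"
    "pos (reindex (cyc_succ n) v) \<in> {pos v + 2, pos v + 2 - 2 * int n}"
    "pos (reindex (cyc_pred n) v) \<in> {pos v - 2, pos v - 2 + 2 * int n}"
  using assms int_cyc_succ int_cyc_pred
  by (cases v; force simp: Sn_adj_iff cyc_succ_lt cyc_pred_lt cyc_succ_pred)+

lemma Sn_ring_step_toward:
  assumes "u \<in> Sn_verts n" "v \<in> Sn_verts n" "2 \<le> cyc_dist (2 * int n) (pos u) (pos v)"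
  shows "\<exists>y. (y, v) \<in> Sn_adj n \<and> Sn_dist n u y + 1 = Sn_dist n u v"
  using Sn_dist_step_toward[OF assms(1,2), of "reindex (cyc_succ n) v" "reindex (cyc_pred n) v" 2]
    Sn_ring_neighbours[OF assms(2)] Sn_adj_verts assms(3) by blast

lemma Sn_zigzag_step_toward:
  assumes "u \<in> Sn_verts n" "v \<in> Sn_verts n" "lev v = 0"
    and odd: "odd (cyc_dist (2 * int n) (pos u) (pos v))"
  shows "\<exists>y. (y, v) \<in> Sn_adj n \<and> Sn_dist n u y + 1 = Sn_dist n u v"
proof -
  have "1 \<le> cyc_dist (2 * int n) (pos u) (pos v)"
    using odd cyc_dist_nonneg pos_range assms(1,2) by (metis dvd_0_right int_one_le_iff_zero_less order_le_less)
  moreover obtain y1 y2 where "(y1, v) \<in> Sn_adj n" "(y2, v) \<in> Sn_adj n" "lev y1 = 0" "lev y2 = 0"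
    "pos y1 \<in> {pos v + 1, pos v + 1 - 2 * int n}" "pos y2 \<in> {pos v - 1, pos v - 1 + 2 * int n}"
  proof (cases v)
    case (PA j)
    then show ?thesis using that[of "PB j" "PB (cyc_pred n j)"] assms(2) int_cyc_pred[of j n]
      by (force simp: Sn_adj_iff cyc_pred_lt cyc_succ_pred)
  next
    case (PB j)
    then show ?thesis using that[of "PA (cyc_succ n j)" "PA j"] assms(2) int_cyc_succ[of j n]
      by (force simp: Sn_adj_iff cyc_succ_lt)
  qed (use assms(3) in auto)
  ultimately show ?thesis
    using Sn_dist_step_toward[OF assms(1,2), of y1 y2 1] assms Sn_adj_verts by auto
qed

lemma Sn_vertical_step_toward:
  assumes v: "v \<in> Sn_verts n" and "lev u < lev v \<or> lev v < lev u \<and> (\<nexists>j. v = PA j)"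
  shows "\<exists>y. (y, v) \<in> Sn_adj n \<and> Sn_dist n u y + 1 = Sn_dist n u v"
proof (cases v)
  case (PB j)
  then show ?thesis using assms lev_range[of u]
    by (intro exI[of _ "PC j"]) (auto simp: Sn_adj_iff Sn_dist_def)
next
  case (PC j)
  show ?thesis
  proof (cases "lev u = 0")
    case True
    then show ?thesis using PC v by (intro exI[of _ "PB j"]) (auto simp: Sn_adj_iff Sn_dist_def)
  next
    case False
    then show ?thesis using PC assms lev_range[of u]
      by (intro exI[of _ "PD j"]) (auto simp: Sn_adj_iff Sn_dist_def)
  qed
next
  case (PD j)
  then show ?thesis using assms lev_range[of u]
    by (intro exI[of _ "PC j"]) (auto simp: Sn_adj_iff Sn_dist_def)
qed (use assms lev_range[of u] in auto)

lemma Sn_dist_predecessor: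
  assumes u: "u \<in> Sn_verts n" and v: "v \<in> Sn_verts n" and "0 < Sn_dist n u v"
  shows "\<exists>y. (y, v) \<in> Sn_adj n \<and> Sn_dist n u y + 1 = Sn_dist n u v"
proof -
  let ?c = "cyc_dist (2 * int n) (pos u) (pos v)"
  consider "lev u < lev v \<or> lev v < lev u \<and> (\<nexists>j. v = PA j)" | "lev u = lev v \<or> (\<exists>j. v = PA j)"
    by fastforce
  then show ?thesis
  proof cases
    case 1
    with v show ?thesis by (rule Sn_vertical_step_toward)
  next
    case 2
    have c_parity: "even ?c \<longleftrightarrow> even (pos u - pos v)" by (rule cyc_dist_even_iff)
    show ?thesis
    proof (cases "even ?c")
      case True
      have "lev u = lev v"
        using 2 True c_parity even_pos_iff[of u] even_pos_iff[of v] by fastforce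
      moreover have "u \<noteq> v" using assms Sn_dist_self by force
      ultimately have "?c \<noteq> 0" using u v pos_range cyc_dist_eq_0_iff pos_lev_inj by blast
      then have "2 \<le> ?c" using True u v pos_range cyc_dist_nonneg by fastforce
      then show ?thesis using Sn_ring_step_toward u v by blast
    next
      case False
      have "lev v = 0"
        using 2 False c_parity even_pos_iff[of u] even_pos_iff[of v] by fastforce
      then show ?thesis using Sn_zigzag_step_toward u v False by blast
    qed
  qed
qed

interpretation Sn: graph_distance "Sn_verts n" "Sn_adj n" "Sn_dist n" for n
proof
  show "Sn_adj n \<subseteq> Sn_verts n \<times> Sn_verts n" using Sn_adj_verts by auto
  show "(y, x) \<in> Sn_adj n" if "(x, y) \<in> Sn_adj n" for x y using that unfolding Sn_adj_def by auto
qed (auto simp: Sn_dist_self Sn_dist_pos Sn_dist_sym Sn_dist_edge_le Sn_dist_predecessor finite_Sn_verts)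

abbreviation Sn_mmd :: "nat \<Rightarrow> pvert \<Rightarrow> pvert \<Rightarrow> bool" where
  "Sn_mmd n \<equiv> Sn.mutually_maximally_distant n"

lemma Sn_dist_le_diameter:
  assumes "u \<in> Sn_verts n" "v \<in> Sn_verts n"
  shows "Sn_dist n u v \<le> 2 + (int n + 1) div 2"
proof -
  have "(cyc_dist (2 * int n) (pos u) (pos v) + 1) div 2 \<le> (int n + 1) div 2"
    using cyc_dist_le_half[of "2 * int n"] by (intro zdiv_mono1) auto
  moreover have "\<bar>lev u - lev v\<bar> \<le> 2" using lev_range[of u] lev_range[of v] by auto
  ultimately show ?thesis unfolding Sn_dist_def by linarith
qed

lemma Sn_dist_eq_diameter:
  assumes "lev x = 0" "lev y = 2" "pos y - pos x \<in> {int n, - int n}"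
  shows "Sn_dist n x y = 2 + (int n + 1) div 2"
  using assms unfolding Sn_dist_def cyc_dist_def by auto

lemma Sn_mmd_if_diameter:
  assumes "u \<in> Sn_verts n" "v \<in> Sn_verts n" "Sn_dist n u v = 2 + (int n + 1) div 2"
  shows "Sn_mmd n u v"
  unfolding Sn.mutually_maximally_distant_def
  using assms Sn_dist_le_diameter Sn_adj_verts by metis

lemma Sn_mmd_antipodal_PA:
  assumes "i < n" "j < n" "2 * cyc_dist (int n) (int i) (int j) = int n"
  shows "Sn_mmd n (PA i) (PA j)"
proof -
  have bound: "Sn_dist n x y \<le> Sn_dist n (PA i) (PA j)" if "lev x = 0" "lev y = 0" for x y
  proof -
    have "(cyc_dist (2 * int n) (pos x) (pos y) + 1) div 2 \<le> (int n + 1) div 2"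
      using cyc_dist_le_half[of "2 * int n"] by (intro zdiv_mono1) auto
    then show ?thesis using that assms(3) unfolding Sn_dist_def by (auto simp: cyc_dist_double)
  qed
  have "lev x = 0" if "(PA k, x) \<in> Sn_adj n" for k x
    using that by (cases x) (auto simp: Sn_adj_iff)
  then show ?thesis unfolding Sn.mutually_maximally_distant_def using bound by simp
qed

lemma Sn_not_mmd_below:
  assumes "u \<in> Sn_verts n" "v \<in> Sn_verts n" "lev u \<le> lev v" "v = PB j \<or> v = PC j"
  shows "\<not> Sn_mmd n u v"
proof -
  define w where "w = (if v = PB j then PC j else PD j)"
  have "(v, w) \<in> Sn_adj n" using assms unfolding w_def by (auto simp: Sn_adj_iff)
  moreover have "Sn_dist n u w = Sn_dist n u v + 1" using assms unfolding w_def Sn_dist_def by auto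
  ultimately show ?thesis unfolding Sn.mutually_maximally_distant_def by force
qed

lemma Sn_not_mmd_PA:
  assumes i: "i < n" and j: "j < n" and near: "2 * cyc_dist (int n) (int i) (int j) < int n"
  shows "\<not> Sn_mmd n (PA i) (PA j)"
proof -
  let ?c = "cyc_dist (2 * int n) (2 * int i) (2 * int j)"
  have "even ?c" "0 \<le> ?c" using cyc_dist_double[of "int n"] cyc_dist_nonneg[of "int i" "int n" "int j"] i j
    by auto
  moreover have "cyc_dist (2 * int n) (2 * int i) (2 * int j + 1) = ?c + 1
      \<or> cyc_dist (2 * int n) (2 * int i) (2 * int (cyc_pred n j) + 1) = ?c + 1"
    using i j near int_cyc_pred[OF j] cyc_pred_lt[OF j] cyc_dist_double[of "int n"]
    by (intro cyc_dist_away) auto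
  ultimately have "Sn_dist n (PA i) (PB j) = Sn_dist n (PA i) (PA j) + 1
      \<or> Sn_dist n (PA i) (PB (cyc_pred n j)) = Sn_dist n (PA i) (PA j) + 1"
    unfolding Sn_dist_def by auto
  moreover have "(PA j, PB j) \<in> Sn_adj n" "(PA j, PB (cyc_pred n j)) \<in> Sn_adj n"
    using j by (auto simp: Sn_adj_iff cyc_pred_lt cyc_succ_pred)
  ultimately show ?thesis unfolding Sn.mutually_maximally_distant_def by force
qed

lemma Sn_mmd_cases:
  assumes "u \<in> Sn_verts n" "v \<in> Sn_verts n" "Sn_mmd n u v"
  shows "(\<exists>i. u = PD i) \<or> (\<exists>j. v = PD j)
    \<or> (\<exists>i j. u = PA i \<and> v = PA j \<and> 2 * cyc_dist (int n) (int i) (int j) = int n)"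
proof (rule ccontr)
  assume contra: "\<not> ?thesis"
  consider (AA) i j where "u = PA i" "v = PA j" 
    | (v_above) j where "lev u \<le> lev v" "v = PB j \<or> v = PC j"
    | (u_above) i where "lev v \<le> lev u" "u = PB i \<or> u = PC i"
    using contra by (cases u; cases v) auto
  then show False
  proof cases
    case AA
    then show ?thesis
      using contra assms Sn_not_mmd_PA cyc_dist_le_half[of "int n" "int i" "int j"] by fastforce
  next
    case v_above
    then show ?thesis using assms Sn_not_mmd_below by blast
  next
    case u_above
    then show ?thesis using assms(1,2) Sn_not_mmd_below Sn.mmd_sym[OF assms(3)] by blast
  qed
qed

lemma Sn_strong_resolving_setI:
  assumes "S \<subseteq> Sn_verts n" "PD ` {..<n} \<subseteq> S"
    and "\<And>i j. i < n \<Longrightarrow> j < n \<Longrightarrow> 2 * cyc_dist (int n) (int i) (int j) = int n \<Longrightarrow> PA i \<in> S \<or> PA j \<in> S"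
  shows "strong_resolving_set (Sn_verts n) (Sn_adj n) S"
  using assms(1)
proof (rule Sn.strong_resolving_set_if_hits_mmd)
  fix u v assume uv: "u \<in> Sn_verts n" "v \<in> Sn_verts n" "Sn_mmd n u v"
  then consider (D_u) i where "u = PD i" | (D_v) j where "v = PD j"
    | (antipodal) i j where "u = PA i" "v = PA j" "2 * cyc_dist (int n) (int i) (int j) = int n"
    using Sn_mmd_cases by blast
  then show "u \<in> S \<or> v \<in> S"
    by cases (use uv assms(2,3) in auto)
qed

definition antipode :: "nat \<Rightarrow> nat \<Rightarrow> nat" where
  "antipode n i = (i + n div 2) mod n"

lemma antipode_lt: "0 < n \<Longrightarrow> antipode n i < n"
  unfolding antipode_def by simp

lemma int_antipode:
  assumes "i < n"
  shows "int (antipode n i) \<in> {int i + int (n div 2), int i + int (n div 2) - int n}"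
proof (cases "i + n div 2 < n")
  case False
  then have "(i + n div 2) mod n = i + n div 2 - n" using assms by (subst le_mod_geq) auto
  then show ?thesis using False unfolding antipode_def by simp
qed (simp add: antipode_def)

lemma inj_on_antipode: "inj_on (antipode n) {..<n}"
proof (rule inj_onI)
  fix i j assume "i \<in> {..<n}" "j \<in> {..<n}" "antipode n i = antipode n j"
  moreover note int_antipode[of i n] int_antipode[of j n]
  ultimately have "int i = int j" by (simp only: lessThan_iff insert_iff empty_iff simp_thms) arith
  then show "i = j" by simp
qed

lemma Sn_odd_strong_resolving_set:
  assumes "odd n"
  shows "strong_resolving_set (Sn_verts n) (Sn_adj n) (PD ` {..<n})"
proof (rule Sn_strong_resolving_setI)
  show "i < n \<Longrightarrow> j < n \<Longrightarrow> 2 * cyc_dist (int n) (int i) (int j) = int n \<Longrightarrow> PA i \<in> PD ` {..<n} \<or> PA j \<in> PD ` {..<n}"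
    for i j using assms by presburger
qed auto

lemma Sn_even_strong_resolving_set:
  assumes "n = 2 * m"
  shows "strong_resolving_set (Sn_verts n) (Sn_adj n) (PD ` {..<n} \<union> PA ` {..<m})"
proof (rule Sn_strong_resolving_setI)
  fix i j assume "i < n" "j < n" "2 * cyc_dist (int n) (int i) (int j) = int n"
  then have "\<not> (m \<le> i \<and> m \<le> j)"
    using assms cyc_dist_le_abs[of "int n" "int i" "int j"] by auto
  then show "PA i \<in> PD ` {..<n} \<union> PA ` {..<m} \<or> PA j \<in> PD ` {..<n} \<union> PA ` {..<m}" by auto
qed (use assms in auto)

lemma Sn_odd_card_le:
  assumes "odd n" "strong_resolving_set (Sn_verts n) (Sn_adj n) S"
  shows "n \<le> card S"
proof -
  have "0 < n" using assms(1) by presburger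
  have "card {..<n} \<le> card S"
  proof (rule Sn.card_le_strong_resolving_set[OF assms(2)])
    fix i assume "i \<in> {..<n}"
    moreover have "2 * int (n div 2) + 1 = int n" using assms(1) by presburger
    ultimately have "Sn_dist n (PA i) (PD (antipode n i)) = 2 + (int n + 1) div 2"
      using int_antipode[of i n] by (intro Sn_dist_eq_diameter) auto
    then show "PA i \<in> Sn_verts n \<and> PD (antipode n i) \<in> Sn_verts n \<and> PA i \<noteq> PD (antipode n i)
        \<and> Sn_mmd n (PA i) (PD (antipode n i))"
      using \<open>i \<in> {..<n}\<close> antipode_lt[OF \<open>0 < n\<close>] Sn_mmd_if_diameter by auto
  next
    fix i j assume "i \<in> {..<n}" "j \<in> {..<n}" "i \<noteq> j"
    then show "{PA i, PD (antipode n i)} \<inter> {PA j, PD (antipode n j)} = {}"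
      using inj_on_antipode[of n] by (auto dest: inj_onD)
  qed
  then show ?thesis by simp
qed

lemma Sn_even_card_le:
  assumes n: "n = 2 * m" and "strong_resolving_set (Sn_verts n) (Sn_adj n) S"
  shows "n + m \<le> card S"
proof (cases "m = 0")
  case False
  then have "0 < n" using n by simp
  define f :: "nat + nat \<Rightarrow> pvert" where "f = case_sum PA PB"
  define g :: "nat + nat \<Rightarrow> pvert" where "g = case_sum (\<lambda>i. PA (i + m)) (\<lambda>j. PD (antipode n j))"
  have "card ({..<m} <+> {..<n}) \<le> card S"
  proof (rule Sn.card_le_strong_resolving_set[OF assms(2)])
    fix k assume "k \<in> {..<m} <+> {..<n}"
    then consider (A) i where "k = Inl i" "i < m" | (B) j where "k = Inr j" "j < n" by auto
    then show "f k \<in> Sn_verts n \<and> g k \<in> Sn_verts n \<and> f k \<noteq> g k \<and> Sn_mmd n (f k) (g k)"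
    proof cases
      case A
      have "cyc_dist (int n) (int i) (int (i + m)) = int m" using n unfolding cyc_dist_def by auto
      then show ?thesis using A n Sn_mmd_antipodal_PA[of i n "i + m"] unfolding f_def g_def by auto
    next
      case B
      have "2 * int (n div 2) = int n" using n by simp
      then have "Sn_dist n (PB j) (PD (antipode n j)) = 2 + (int n + 1) div 2"
        using int_antipode[of j n] B by (intro Sn_dist_eq_diameter) auto
      then show ?thesis using B antipode_lt[OF \<open>0 < n\<close>] Sn_mmd_if_diameter unfolding f_def g_def by auto
    qed
  next
    fix k l assume "k \<in> {..<m} <+> {..<n}" "l \<in> {..<m} <+> {..<n}" "k \<noteq> l"
    then show "{f k, g k} \<inter> {f l, g l} = {}"
      using inj_on_antipode[of n] unfolding f_def g_def by (auto dest: inj_onD)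
  qed
  then show ?thesis using n by (simp add: card_Plus)
qed (use n in simp)

theorem theorem3p2:
  fixes n :: nat
  assumes "n \<ge> 3"
  shows "sdim (Sn_verts n) (Sn_adj n) = (if odd n then n else 3 * n div 2)"
proof (cases "odd n")
  case True
  have "sdim (Sn_verts n) (Sn_adj n) = n"
  proof (rule sdim_eqI)
    show "strong_resolving_set (Sn_verts n) (Sn_adj n) (PD ` {..<n})"
      using True by (rule Sn_odd_strong_resolving_set)
    show "card (PD ` {..<n}) = n" by (simp add: card_image inj_on_def)
  qed (use True Sn_odd_card_le in blast)
  then show ?thesis using True by simp
next
  case False
  then obtain m where n: "n = 2 * m" by blast
  have "sdim (Sn_verts n) (Sn_adj n) = n + m"
  proof (rule sdim_eqI)
    show "strong_resolving_set (Sn_verts n) (Sn_adj n) (PD ` {..<n} \<union> PA ` {..<m})"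
      using n by (rule Sn_even_strong_resolving_set)
    show "card (PD ` {..<n} \<union> PA ` {..<m}) = n + m"
      by (subst card_Un_disjoint) (auto simp: card_image inj_on_def)
  qed (use n Sn_even_card_le in blast)
  then show ?thesis using False n by simp
qed

end
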